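(* Let $B\in M_n(\mathbb{Z})$, $B'\in M_{n'}(\mathbb{Z})$ be skew-symmetric and let $R\in M_{n',n}(\mathbb{Z}_{\ge0})$ satisfy ${}^tR\,B'\,R=B$. Then the algebra homomorphism $\psi_R:\mathcal{S}_B\to\mathcal{S}_{B'}$, $\psi_R(y_i)=\,:y'^{Rv_i}:$, is continuous with respect to the degree topologies if and only if every column of $R$ contains a nonzero entry.
   Context: For skew-symmetric $B\in M_n(\mathbb{Z})$, $\mathcal{S}_B$ is the skew polynomial algebra over $\mathbb{Q}(q)$ with basis the monomials $y^{\bf m}=y_1^{m_1}\cdots y_n^{m_n}$, ${\bf m}\in\mathbb{Z}_{\ge0}^n$, and multiplication determined by $y_iy_j=q^{2b_{ij}}y_jy_i$; similarly $\mathcal{S}_{B'}$ with generators $y'_k$. Normal ordering: $:y^{\bf m}:=q^{{}^t{\bf m}L{\bf m}}y^{\bf m}$ with $L$ the strictly lower triangular part of $B$ (similarly for $B'$). The degree topology on $\mathcal{S}_B$ is the linear topology whose basic neighbourhoods of $0$ are the spans of monomials of total degree $m_1+\dots+m_n\ge N$, $N\ge0$; its completion is the skew formal power series algebra $\widehat{\mathcal{S}_B}$. $v_i$ is the $i$-th unit vector. *)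

theory Defs
  imports "HOL-Analysis.Analysis" "HOL-Computational_Algebra.Fraction_Field"
    "HOL-Computational_Algebra.Polynomial"
begin

(* Base field Q(q) = fraction field of Q[q]; indices are 0-based: y_0,...,y_{n-1}. *)
type_synonym qq = "rat poly fract"

definition qvar :: qq where "qvar = Fract [:0, 1:] 1"

type_synonym mon = "nat \<Rightarrow> nat"

definition mons :: "nat \<Rightarrow> mon set" where
  "mons n = {m. \<forall>i\<ge>n. m i = 0}"

definition madd :: "mon \<Rightarrow> mon \<Rightarrow> mon" where
  "madd a b = (\<lambda>k. a k + b k)"

definition mdeg :: "nat \<Rightarrow> mon \<Rightarrow> nat" where
  "mdeg n m = (\<Sum>i<n. m i)"

(* elements of S_B: finitely supported coefficient functions on monomials *)
type_synonym elt = "mon \<Rightarrow> qq"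

definition supp :: "elt \<Rightarrow> mon set" where
  "supp f = {m. f m \<noteq> 0}"

definition SB :: "nat \<Rightarrow> elt set" where
  "SB n = {f. finite (supp f) \<and> supp f \<subseteq> mons n}"

definition skew_symmetric :: "nat \<Rightarrow> (nat \<Rightarrow> nat \<Rightarrow> int) \<Rightarrow> bool" where
  "skew_symmetric n B = (\<forall>i<n. \<forall>j<n. B i j = - B j i)"

(* y^a y^b = q^(2 sum_{i>j} b_ij a_i b_j) y^(a+b), from y_i y_j = q^(2 b_ij) y_j y_i *)
definition twist :: "(nat \<Rightarrow> nat \<Rightarrow> int) \<Rightarrow> nat \<Rightarrow> mon \<Rightarrow> mon \<Rightarrow> qq" where
  "twist B n a b = qvar powi (2 * (\<Sum>i<n. \<Sum>j<i. B i j * int (a i) * int (b j)))"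

definition smul :: "(nat \<Rightarrow> nat \<Rightarrow> int) \<Rightarrow> nat \<Rightarrow> elt \<Rightarrow> elt \<Rightarrow> elt" where
  "smul B n f g = (\<lambda>m. \<Sum>p\<in>{(a, b). a \<in> supp f \<and> b \<in> supp g \<and> madd a b = m}.
       f (fst p) * g (snd p) * twist B n (fst p) (snd p))"

definition mono :: "mon \<Rightarrow> elt" where
  "mono m = (\<lambda>k. if k = m then 1 else 0)"

definition sone :: elt where "sone = mono (\<lambda>_. 0)"

definition scal :: "qq \<Rightarrow> elt \<Rightarrow> elt" where
  "scal c f = (\<lambda>m. c * f m)"

definition spow :: "(nat \<Rightarrow> nat \<Rightarrow> int) \<Rightarrow> nat \<Rightarrow> elt \<Rightarrow> nat \<Rightarrow> elt" where
  "spow B n x k = ((smul B n x) ^^ k) sone"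

(* normal ordering :y^m: = q^(m^t L m) y^m, L strictly lower triangular part of B *)
definition nord :: "(nat \<Rightarrow> nat \<Rightarrow> int) \<Rightarrow> nat \<Rightarrow> mon \<Rightarrow> elt" where
  "nord B n m = scal (qvar powi (\<Sum>i<n. \<Sum>j<i. int (m i) * B i j * int (m j))) (mono m)"

definition col :: "(nat \<Rightarrow> nat \<Rightarrow> nat) \<Rightarrow> nat \<Rightarrow> nat \<Rightarrow> mon" where
  "col R n' i = (\<lambda>k. if k < n' then R k i else 0)"

(* image of y^m = y_0^{m_0} ... y_{n-1}^{m_{n-1}} under the algebra hom y_i \<mapsto> :y'^{R v_i}: *)
definition psi_mon :: "(nat \<Rightarrow> nat \<Rightarrow> int) \<Rightarrow> nat \<Rightarrow> (nat \<Rightarrow> nat \<Rightarrow> nat) \<Rightarrow> nat \<Rightarrow> mon \<Rightarrow> elt" where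
  "psi_mon B' n' R n m =
     foldl (\<lambda>acc i. smul B' n' acc (spow B' n' (nord B' n' (col R n' i)) (m i))) sone [0..<n]"

definition psi :: "(nat \<Rightarrow> nat \<Rightarrow> int) \<Rightarrow> nat \<Rightarrow> (nat \<Rightarrow> nat \<Rightarrow> nat) \<Rightarrow> nat \<Rightarrow> elt \<Rightarrow> elt" where
  "psi B' n' R n f = (\<lambda>k. \<Sum>m\<in>supp f. f m * psi_mon B' n' R n m k)"

definition nbhd :: "nat \<Rightarrow> nat \<Rightarrow> elt set" where
  "nbhd n N = {f \<in> SB n. \<forall>m \<in> supp f. N \<le> mdeg n m}"

definition degtop :: "nat \<Rightarrow> elt topology" where
  "degtop n = topology (\<lambda>U. U \<subseteq> SB n \<and>
      (\<forall>f\<in>U. \<exists>N. \<forall>g\<in>nbhd n N. (\<lambda>m. f m + g m) \<in> U))"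

end

theory Submission
  imports Defs
begin

(* Both topologies are linear and psi_R is additive, so psi_R is continuous iff every degree-N
   neighbourhood of 0 contains the image of some degree-M neighbourhood. Since psi_R sends y^m to a
   scalar multiple of y'^(R m), and deg (R m) >= deg m when no column of R vanishes, M = N works
   in that case. If column j vanishes, then psi_R (y_j^M) = 1 for every M, so no neighbourhood is
   mapped into the degree-1 one. *)

lemma supp_add: "supp (\<lambda>m. f m + g m) \<subseteq> supp f \<union> supp g"
  by (auto simp: supp_def)

lemma SB_add: "f \<in> SB n \<Longrightarrow> g \<in> SB n \<Longrightarrow> (\<lambda>m. f m + g m) \<in> SB n"
  unfolding SB_def using supp_add[of f g] by (auto intro: finite_subset)

lemma SB_zero: "(\<lambda>_. 0) \<in> SB n"
  by (simp add: SB_def supp_def)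

lemma nbhd_subset_SB: "nbhd n N \<subseteq> SB n"
  by (auto simp: nbhd_def)

lemma nbhd_antimono: "N \<le> M \<Longrightarrow> nbhd n M \<subseteq> nbhd n N"
  by (auto simp: nbhd_def)

lemma nbhd_add: "f \<in> nbhd n N \<Longrightarrow> g \<in> nbhd n N \<Longrightarrow> (\<lambda>m. f m + g m) \<in> nbhd n N"
  using SB_add[of f n g] supp_add[of f g] unfolding nbhd_def by blast

lemma istopology_degtop: "istopology (\<lambda>U. U \<subseteq> SB n \<and>
      (\<forall>f\<in>U. \<exists>N. \<forall>g\<in>nbhd n N. (\<lambda>m. f m + g m) \<in> U))"
proof (simp only: istopology_def, intro conjI allI impI)
  fix S T :: "elt set"
  assume S: "S \<subseteq> SB n \<and> (\<forall>f\<in>S. \<exists>N. \<forall>g\<in>nbhd n N. (\<lambda>m. f m + g m) \<in> S)"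
    and T: "T \<subseteq> SB n \<and> (\<forall>f\<in>T. \<exists>N. \<forall>g\<in>nbhd n N. (\<lambda>m. f m + g m) \<in> T)"
  show "S \<inter> T \<subseteq> SB n" using S by blast
  show "\<forall>f\<in>S \<inter> T. \<exists>N. \<forall>g\<in>nbhd n N. (\<lambda>m. f m + g m) \<in> S \<inter> T"
  proof
    fix f assume "f \<in> S \<inter> T"
    then obtain N1 N2 where "\<forall>g\<in>nbhd n N1. (\<lambda>m. f m + g m) \<in> S"
      and "\<forall>g\<in>nbhd n N2. (\<lambda>m. f m + g m) \<in> T" using S T by blast
    then have "\<forall>g\<in>nbhd n (max N1 N2). (\<lambda>m. f m + g m) \<in> S \<inter> T"
      using nbhd_antimono[of N1 "max N1 N2" n] nbhd_antimono[of N2 "max N1 N2" n] by auto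
    then show "\<exists>N. \<forall>g\<in>nbhd n N. (\<lambda>m. f m + g m) \<in> S \<inter> T" by blast
  qed
next
  fix K :: "elt set set"
  assume K: "\<forall>U\<in>K. U \<subseteq> SB n \<and> (\<forall>f\<in>U. \<exists>N. \<forall>g\<in>nbhd n N. (\<lambda>m. f m + g m) \<in> U)"
  show "\<Union>K \<subseteq> SB n" using K by blast
  show "\<forall>f\<in>\<Union>K. \<exists>N. \<forall>g\<in>nbhd n N. (\<lambda>m. f m + g m) \<in> \<Union>K"
  proof
    fix f assume "f \<in> \<Union>K"
    then obtain U where "U \<in> K" "f \<in> U" by blast
    moreover from this obtain N where "\<forall>g\<in>nbhd n N. (\<lambda>m. f m + g m) \<in> U" using K by blast
    ultimately show "\<exists>N. \<forall>g\<in>nbhd n N. (\<lambda>m. f m + g m) \<in> \<Union>K" by blast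
  qed
qed

lemma openin_degtop: "openin (degtop n) U \<longleftrightarrow> U \<subseteq> SB n \<and>
      (\<forall>f\<in>U. \<exists>N. \<forall>g\<in>nbhd n N. (\<lambda>m. f m + g m) \<in> U)"
  unfolding degtop_def using topology_inverse'[OF istopology_degtop] by simp

lemma openin_degtop_nbhd: "openin (degtop n) (nbhd n N)"
  unfolding openin_degtop using nbhd_subset_SB nbhd_add by blast

lemma topspace_degtop: "topspace (degtop n) = SB n"
proof -
  have "openin (degtop n) (SB n)"
    unfolding openin_degtop using SB_add nbhd_subset_SB by blast
  then show ?thesis
    unfolding topspace_def using openin_degtop by blast
qed

lemma continuous_map_degtop_iff:
  assumes maps: "\<phi> ` SB n \<subseteq> SB n'"
    and zero: "\<phi> (\<lambda>_. 0) = (\<lambda>_. 0)"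
    and add: "\<And>f g. f \<in> SB n \<Longrightarrow> g \<in> SB n \<Longrightarrow> \<phi> (\<lambda>m. f m + g m) = (\<lambda>m. \<phi> f m + \<phi> g m)"
  shows "continuous_map (degtop n) (degtop n') \<phi> \<longleftrightarrow> (\<forall>N. \<exists>M. \<phi> ` nbhd n M \<subseteq> nbhd n' N)"
proof
  assume cont: "continuous_map (degtop n) (degtop n') \<phi>"
  show "\<forall>N. \<exists>M. \<phi> ` nbhd n M \<subseteq> nbhd n' N"
  proof
    fix N
    let ?P = "{f \<in> topspace (degtop n). \<phi> f \<in> nbhd n' N}"
    have "openin (degtop n) ?P"
      using cont openin_degtop_nbhd unfolding continuous_map_def by blast
    moreover have "(\<lambda>_. 0) \<in> ?P"
      using zero SB_zero by (simp add: topspace_degtop nbhd_def supp_def)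
    ultimately obtain M where "\<forall>g\<in>nbhd n M. (\<lambda>m. 0 + g m) \<in> ?P"
      unfolding openin_degtop by blast
    then show "\<exists>M. \<phi> ` nbhd n M \<subseteq> nbhd n' N" by auto
  qed
next
  assume small: "\<forall>N. \<exists>M. \<phi> ` nbhd n M \<subseteq> nbhd n' N"
  show "continuous_map (degtop n) (degtop n') \<phi>"
    unfolding continuous_map_def topspace_degtop
  proof (intro conjI allI impI)
    show "\<phi> \<in> SB n \<rightarrow> SB n'" using maps by blast
    fix U assume "openin (degtop n') U"
    then have U: "U \<subseteq> SB n'" "\<forall>h\<in>U. \<exists>N. \<forall>g\<in>nbhd n' N. (\<lambda>m. h m + g m) \<in> U"
      by (simp_all add: openin_degtop)
    show "openin (degtop n) {f \<in> SB n. \<phi> f \<in> U}"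
      unfolding openin_degtop
    proof (intro conjI ballI)
      fix f assume f: "f \<in> {f \<in> SB n. \<phi> f \<in> U}"
      then obtain N where N: "\<forall>h\<in>nbhd n' N. (\<lambda>m. \<phi> f m + h m) \<in> U"
        using U by blast
      obtain M where M: "\<phi> ` nbhd n M \<subseteq> nbhd n' N" using small by blast
      have "(\<lambda>m. f m + g m) \<in> {f \<in> SB n. \<phi> f \<in> U}" if g: "g \<in> nbhd n M" for g
      proof -
        have "g \<in> SB n" using g nbhd_subset_SB by blast
        moreover have "\<phi> g \<in> nbhd n' N" using g M by blast
        ultimately show ?thesis using f N add[of f g] SB_add[of f n g] by auto
      qed
      then show "\<exists>M. \<forall>g\<in>nbhd n M. (\<lambda>m. f m + g m) \<in> {f \<in> SB n. \<phi> f \<in> U}" by blast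
    qed blast
  qed
qed

lemma supp_mono: "supp (mono m) = {m}"
  by (auto simp: supp_def mono_def)

lemma supp_sone: "supp sone = {\<lambda>_. 0}"
  by (simp add: sone_def supp_mono)

lemma supp_nord: "supp (nord B n m) \<subseteq> {m}"
  by (auto simp: supp_def nord_def scal_def mono_def)

lemma supp_smul_singleton:
  assumes "supp f \<subseteq> {a}" "supp g \<subseteq> {b}"
  shows "supp (smul B n f g) \<subseteq> {madd a b}"
proof
  fix m assume m: "m \<in> supp (smul B n f g)"
  show "m \<in> {madd a b}"
  proof (rule ccontr)
    assume "m \<notin> {madd a b}"
    then have "{(x, y). x \<in> supp f \<and> y \<in> supp g \<and> madd x y = m} = {}"
      using assms by auto
    then have "smul B n f g m = 0" unfolding smul_def by (simp only: sum.empty)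
    then show False using m by (simp add: supp_def)
  qed
qed

lemma supp_spow_singleton:
  assumes "supp x \<subseteq> {a}"
  shows "supp (spow B n x k) \<subseteq> {\<lambda>i. k * a i}"
proof (induction k)
  case 0
  then show ?case by (simp add: spow_def supp_sone)
next
  case (Suc k)
  have "madd a (\<lambda>i. k * a i) = (\<lambda>i. Suc k * a i)" by (simp add: madd_def)
  then show ?case using supp_smul_singleton[OF assms Suc] by (simp add: spow_def)
qed

definition matvec :: "nat \<Rightarrow> (nat \<Rightarrow> nat \<Rightarrow> nat) \<Rightarrow> nat \<Rightarrow> mon \<Rightarrow> mon" where
  "matvec n' R n m = (\<lambda>l. \<Sum>i<n. m i * col R n' i l)"

lemma matvec_mons: "matvec n' R n m \<in> mons n'"
  by (simp add: matvec_def mons_def col_def)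

lemma supp_psi_mon: "supp (psi_mon B' n' R n m) \<subseteq> {matvec n' R n m}"
proof -
  have "supp (foldl (\<lambda>acc i. smul B' n' acc (spow B' n' (nord B' n' (col R n' i)) (m i)))
          sone [0..<k]) \<subseteq> {matvec n' R k m}" for k
  proof (induction k)
    case 0
    then show ?case by (simp add: supp_sone matvec_def)
  next
    case (Suc k)
    have "madd (matvec n' R k m) (\<lambda>i. m k * col R n' k i) = matvec n' R (Suc k) m"
      by (simp add: madd_def matvec_def)
    moreover have "supp (spow B' n' (nord B' n' (col R n' k)) (m k)) \<subseteq> {\<lambda>i. m k * col R n' k i}"
      by (rule supp_spow_singleton[OF supp_nord])
    then have "supp (smul B' n'
        (foldl (\<lambda>acc i. smul B' n' acc (spow B' n' (nord B' n' (col R n' i)) (m i))) sone [0..<k])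
        (spow B' n' (nord B' n' (col R n' k)) (m k)))
      \<subseteq> {madd (matvec n' R k m) (\<lambda>i. m k * col R n' k i)}"
      by (rule supp_smul_singleton[OF Suc.IH])
    ultimately show ?case by simp
  qed
  then show ?thesis unfolding psi_mon_def .
qed

lemma psi_eq_sum_over:
  assumes "finite S" "supp f \<subseteq> S"
  shows "psi B' n' R n f = (\<lambda>k. \<Sum>m\<in>S. f m * psi_mon B' n' R n m k)"
  unfolding psi_def using assms by (intro ext sum.mono_neutral_left) (auto simp: supp_def)

lemma psi_add:
  assumes "f \<in> SB n" "g \<in> SB n"
  shows "psi B' n' R n (\<lambda>m. f m + g m) = (\<lambda>k. psi B' n' R n f k + psi B' n' R n g k)"
proof -
  have fin: "finite (supp f \<union> supp g)" using assms by (simp add: SB_def)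
  show ?thesis
    unfolding psi_eq_sum_over[OF fin supp_add] psi_eq_sum_over[OF fin Un_upper1]
      psi_eq_sum_over[OF fin Un_upper2]
    by (auto simp: sum.distrib distrib_right)
qed

lemma psi_zero: "psi B' n' R n (\<lambda>_. 0) = (\<lambda>_. 0)"
  by (simp add: psi_def supp_def)

lemma supp_psi: "supp (psi B' n' R n f) \<subseteq> matvec n' R n ` supp f"
proof
  fix k assume k: "k \<in> supp (psi B' n' R n f)"
  show "k \<in> matvec n' R n ` supp f"
  proof (rule ccontr)
    assume "k \<notin> matvec n' R n ` supp f"
    then have "psi_mon B' n' R n m k = 0" if "m \<in> supp f" for m
      using that supp_psi_mon[of B' n' R n m] by (auto simp: supp_def)
    then have "psi B' n' R n f k = 0" unfolding psi_def by simp
    then show False using k by (simp add: supp_def)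
  qed
qed

lemma psi_SB: "psi B' n' R n ` SB n \<subseteq> SB n'"
proof
  fix h assume "h \<in> psi B' n' R n ` SB n"
  then obtain f where f: "finite (supp f)" and h: "h = psi B' n' R n f"
    by (auto simp: SB_def)
  have "supp h \<subseteq> matvec n' R n ` supp f" using h supp_psi by blast
  then show "h \<in> SB n'"
    using f matvec_mons[of n' R n] by (auto simp: SB_def intro: finite_subset)
qed

lemma mdeg_le_mdeg_matvec:
  assumes "\<forall>j<n. \<exists>i<n'. R i j \<noteq> 0"
  shows "mdeg n m \<le> mdeg n' (matvec n' R n m)"
proof -
  have "mdeg n' (matvec n' R n m) = (\<Sum>i<n. m i * (\<Sum>l<n'. R l i))"
    by (simp add: mdeg_def matvec_def col_def sum_distrib_left sum.swap[of _ "{..<n'}"])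
  also have "\<dots> \<ge> (\<Sum>i<n. m i)"
  proof (rule sum_mono)
    fix i assume "i \<in> {..<n}"
    then obtain l where l: "l < n'" "R l i \<noteq> 0" using assms by auto
    then have "R l i \<le> (\<Sum>l<n'. R l i)" by (intro member_le_sum) auto
    then show "m i \<le> m i * (\<Sum>l<n'. R l i)" using l by simp
  qed
  finally show ?thesis by (simp add: mdeg_def)
qed

lemma psi_nbhd_subset:
  assumes "\<forall>j<n. \<exists>i<n'. R i j \<noteq> 0"
  shows "psi B' n' R n ` nbhd n N \<subseteq> nbhd n' N"
proof
  fix h assume "h \<in> psi B' n' R n ` nbhd n N"
  then obtain g where g: "g \<in> SB n" "\<forall>m\<in>supp g. N \<le> mdeg n m" and h: "h = psi B' n' R n g"
    by (auto simp: nbhd_def)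
  have "N \<le> mdeg n' k" if k: "k \<in> supp h" for k
  proof -
    obtain m where m: "m \<in> supp g" "k = matvec n' R n m"
      using k h supp_psi by blast
    then have "N \<le> mdeg n m" using g(2) by blast
    also have "\<dots> \<le> mdeg n' k" using m(2) mdeg_le_mdeg_matvec[OF assms] by simp
    finally show ?thesis .
  qed
  moreover have "h \<in> SB n'" using psi_SB g(1) h by blast
  ultimately show "h \<in> nbhd n' N" by (simp add: nbhd_def)
qed

lemma smul_sone_sone: "smul B n sone sone = sone"
proof
  fix m
  have "{(a, b). a \<in> supp sone \<and> b \<in> supp sone \<and> madd a b = m} =
        (if m = (\<lambda>_. 0) then {(\<lambda>_. 0, \<lambda>_. 0)} else {})"
    by (auto simp: supp_sone madd_def)
  then show "smul B n sone sone m = sone m"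
    by (simp add: smul_def twist_def sone_def mono_def)
qed

lemma psi_mon_zero_column:
  assumes "\<forall>i<n'. R i j = 0"
  shows "psi_mon B' n' R n (\<lambda>i. if i = j then N else 0) = sone"
proof -
  have "col R n' j = (\<lambda>_. 0)" using assms by (auto simp: col_def)
  then have "nord B' n' (col R n' j) = sone"
    by (simp add: nord_def sone_def scal_def)
  then have "spow B' n' (nord B' n' (col R n' i)) (if i = j then N else 0) = sone" for i
    by (induction N) (auto simp: spow_def smul_sone_sone)
  moreover have "foldl (\<lambda>acc i. smul B' n' acc sone) sone xs = sone" for xs
    by (induction xs) (simp_all add: smul_sone_sone)
  ultimately show ?thesis unfolding psi_mon_def by simp
qed

lemma psi_image_nbhd_not_subset_zero_column:
  assumes "j < n" "\<forall>i<n'. R i j = 0"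
  shows "\<not> psi B' n' R n ` nbhd n M \<subseteq> nbhd n' 1"
proof
  let ?yjM = "mono (\<lambda>i. if i = j then M else 0)"
  assume M: "psi B' n' R n ` nbhd n M \<subseteq> nbhd n' 1"
  have "?yjM \<in> nbhd n M"
    using assms(1) by (simp add: nbhd_def SB_def supp_mono mons_def mdeg_def)
  then have "psi B' n' R n ?yjM \<in> nbhd n' 1" using M by (rule subsetD[OF _ imageI, rotated])
  moreover have "psi B' n' R n ?yjM = sone"
    unfolding psi_def supp_mono using psi_mon_zero_column[where R=R and j=j, OF assms(2)]
    by (simp add: mono_def)
  moreover have "sone \<notin> nbhd n' 1" by (simp add: nbhd_def supp_sone mdeg_def)
  ultimately show False by simp
qed

theorem proposition4p5:
  fixes n n' :: nat and B B' :: "nat \<Rightarrow> nat \<Rightarrow> int" and R :: "nat \<Rightarrow> nat \<Rightarrow> nat"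
  assumes "skew_symmetric n B" and "skew_symmetric n' B'"
    and "\<forall>i<n. \<forall>j<n. (\<Sum>k<n'. \<Sum>l<n'. int (R k i) * B' k l * int (R l j)) = B i j"
  shows "continuous_map (degtop n) (degtop n') (psi B' n' R n)
     \<longleftrightarrow> (\<forall>j<n. \<exists>i<n'. R i j \<noteq> 0)"
proof -
  have "continuous_map (degtop n) (degtop n') (psi B' n' R n)
     \<longleftrightarrow> (\<forall>N. \<exists>M. psi B' n' R n ` nbhd n M \<subseteq> nbhd n' N)"
    by (rule continuous_map_degtop_iff[OF psi_SB psi_zero psi_add])
  also have "\<dots> \<longleftrightarrow> (\<forall>j<n. \<exists>i<n'. R i j \<noteq> 0)"
  proof
    assume "\<forall>N. \<exists>M. psi B' n' R n ` nbhd n M \<subseteq> nbhd n' N"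
    then obtain M where "psi B' n' R n ` nbhd n M \<subseteq> nbhd n' 1" by blast
    then show "\<forall>j<n. \<exists>i<n'. R i j \<noteq> 0"
      using psi_image_nbhd_not_subset_zero_column by blast
  next
    assume "\<forall>j<n. \<exists>i<n'. R i j \<noteq> 0"
    from psi_nbhd_subset[OF this] show "\<forall>N. \<exists>M. psi B' n' R n ` nbhd n M \<subseteq> nbhd n' N"
      by blast
  qed
  finally show ?thesis .
qed

end
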